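(* Let $\omega\in\mathcal C(\mathbb Z)$ satisfy $\omega*\omega=\omega$. Then the map $p_\omega:\beta\mathbb Z\to\mathcal R(p_\omega)$ is a $\mathbb Z$-retraction of $\beta\mathbb Z$ onto the proper subset $\mathcal R(p_\omega)=p_\omega(\beta\mathbb Z)$. Consequently the map $\pi_\omega: C(\beta\mathbb Z)\to C(\beta\mathbb Z)$, $\pi_\omega(f)=f\circ p_\omega$, is a $\mathbb Z$-equivariant idempotent $*$-homomorphism onto a proper subalgebra, with $\sigma(\pi_\omega)=\mathbb T$.
   Context: $\beta\mathbb Z$ is the Stone–Čech compactification of $\mathbb Z$, $\mathcal C(\mathbb Z)=\beta\mathbb Z\setminus\mathbb Z$. Let $\varphi$ be the homeomorphism of $\beta\mathbb Z$ extending $k\mapsto k+1$; $\mathbb Z$ acts on $\beta\mathbb Z$ by $m\cdot q=\varphi^{(m)}(q)$ and on $C(\beta\mathbb Z)\cong\ell^\infty(\mathbb Z)$ by $f\mapsto f(m\cdot\,\cdot)$. For $\omega\in\beta\mathbb Z$, $p_\omega$ is the unique continuous extension of $k\mapsto\varphi^{(k)}(\omega)$ to $\beta\mathbb Z$, and $\omega*q=p_\omega(q)$. A $\mathbb Z$-retraction onto a closed invariant set $Y$ is a continuous equivariant surjection $\gamma:\beta\mathbb Z\to Y$ fixing $Y$ pointwise. For a $\mathbb Z$-equivariant linear map $\pi$ and $x_\lambda=(\lambda^n)_n$, $\pi(x_\lambda)=c_\lambda x_\lambda$ and $\sigma(\pi)=\{\lambda\in\mathbb T:c_\lambda\neq0\}$.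 *)

theory Defs
  imports "HOL-Analysis.Analysis"
begin

text \<open>beta Z modelled as the space of ultrafilters on int (as sets of subsets of int),
with the Stone topology generated by the basic clopen sets {U. A in U}.\<close>

definition is_ultra :: "int set set \<Rightarrow> bool" where
  "is_ultra U \<longleftrightarrow> {} \<notin> U \<and> UNIV \<in> U \<and>
     (\<forall>A B. A \<in> U \<and> B \<in> U \<longrightarrow> A \<inter> B \<in> U) \<and>
     (\<forall>A B. A \<in> U \<and> A \<subseteq> B \<longrightarrow> B \<in> U) \<and>
     (\<forall>A. A \<in> U \<or> - A \<in> U)"

definition betaZ_set :: "int set set set" where
  "betaZ_set = {U. is_ultra U}"

definition betaZ :: "int set set topology" where
  "betaZ = topology_generated_by {{U \<in> betaZ_set. A \<in> U} | A. True}"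

definition pr :: "int \<Rightarrow> int set set" where
  "pr k = {A. k \<in> A}"

definition corona :: "int set set set" where
  "corona = betaZ_set - range pr"

text \<open>The Z-action m . q = phi^(m)(q), where phi extends k |-> k+1; concretely the
  pushforward of q under k |-> k+m (the Stone-Cech extension of k |-> k + m).\<close>
definition act :: "int \<Rightarrow> int set set \<Rightarrow> int set set" where
  "act m q = {A. (\<lambda>k. k + m) -` A \<in> q}"

definition p_om :: "int set set \<Rightarrow> int set set \<Rightarrow> int set set" where
  "p_om \<omega> = (THE g. continuous_map betaZ betaZ g \<and> (\<forall>k. g (pr k) = act k \<omega>)
                 \<and> (\<forall>q. q \<notin> betaZ_set \<longrightarrow> g q = undefined))"

definition star :: "int set set \<Rightarrow> int set set \<Rightarrow> int set set" (infixl "\<star>" 70) where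
  "\<omega> \<star> q = p_om \<omega> q"

definition Z_retraction :: "(int set set \<Rightarrow> int set set) \<Rightarrow> int set set set \<Rightarrow> bool" where
  "Z_retraction \<gamma> Y \<longleftrightarrow> Y \<subseteq> betaZ_set \<and> closedin betaZ Y \<and> (\<forall>m. act m ` Y \<subseteq> Y) \<and>
     continuous_map betaZ (subtopology betaZ Y) \<gamma> \<and> \<gamma> ` betaZ_set = Y \<and>
     (\<forall>m. \<forall>q\<in>betaZ_set. \<gamma> (act m q) = act m (\<gamma> q)) \<and>
     (\<forall>y\<in>Y. \<gamma> y = y)"

text \<open>C(beta Z), complex valued continuous functions (values off beta Z are irrelevant).\<close>
definition CbZ :: "(int set set \<Rightarrow> complex) set" where
  "CbZ = {f. continuous_map betaZ euclidean f}"

definition xhat :: "complex \<Rightarrow> int set set \<Rightarrow> complex" where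
  "xhat l = (THE f. continuous_map betaZ euclidean f \<and> (\<forall>n. f (pr n) = l powi n)
                 \<and> (\<forall>q. q \<notin> betaZ_set \<longrightarrow> f q = 0))"

definition sigma_map :: "((int set set \<Rightarrow> complex) \<Rightarrow> (int set set \<Rightarrow> complex)) \<Rightarrow> complex set" where
  "sigma_map \<pi> = {l. norm l = 1 \<and>
     (\<exists>c. c \<noteq> 0 \<and> (\<forall>q\<in>betaZ_set. \<pi> (xhat l) q = c * xhat l q))}"

end

theory Submission imports Defs begin

text \<open>
  Points of \<open>\<beta>\<int>\<close> are ultrafilters, and \<open>p\<^sub>\<omega>(q)\<close> is the \<open>q\<close>-limit of \<open>k \<cdot> \<omega>\<close>:
  a set \<open>A\<close> belongs to \<open>p\<^sub>\<omega>(q)\<close> iff \<open>{k. A \<in> k \<cdot> \<omega>} \<in> q\<close>. This map is continuous and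
  commutes with the shift, since both \<open>p\<^sub>\<omega>(m \<cdot> q)\<close> and \<open>m \<cdot> p\<^sub>\<omega>(q)\<close> are continuous in \<open>q\<close>
  and agree on the dense set \<open>\<int>\<close>. The same density argument gives
  \<open>\<omega> * (\<omega> * q) = (\<omega> * \<omega>) * q\<close>, so \<open>\<omega> * \<omega> = \<omega>\<close> makes \<open>p\<^sub>\<omega>\<close> idempotent: it is a retraction
  onto its fixed-point set, which is closed because \<open>\<beta>\<int>\<close> is Hausdorff. The image is proper
  as \<open>p\<^sub>\<omega>(0) = \<omega>\<close> is not principal; for the same reason the indicator of \<open>{0}\<close> does not
  factor through \<open>p\<^sub>\<omega>\<close>. Finally each unimodular \<open>\<lambda>\<close> gives a continuous extension \<open>x\<^sub>\<lambda>\<close> of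
  \<open>n \<mapsto> \<lambda>\<^sup>n\<close> with \<open>x\<^sub>\<lambda>(k \<cdot> q) = \<lambda>\<^sup>k x\<^sub>\<lambda>(q)\<close>, whence \<open>x\<^sub>\<lambda> \<circ> p\<^sub>\<omega> = x\<^sub>\<lambda>(\<omega>) x\<^sub>\<lambda>\<close> with
  \<open>|x\<^sub>\<lambda>(\<omega>)| = 1\<close>, and so \<open>\<sigma>(\<pi>\<^sub>\<omega>)\<close> is the whole circle.
\<close>

section \<open>Ultrafilters on the integers\<close>

lemma betaZ_setI:
  assumes "{} \<notin> U" "UNIV \<in> U" "\<And>A B. A \<in> U \<Longrightarrow> B \<in> U \<Longrightarrow> A \<inter> B \<in> U"
    "\<And>A B. A \<in> U \<Longrightarrow> A \<subseteq> B \<Longrightarrow> B \<in> U" "\<And>A. A \<notin> U \<Longrightarrow> - A \<in> U"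
  shows "U \<in> betaZ_set"
  using assms unfolding betaZ_set_def is_ultra_def by blast

lemma betaZ_empty_notin: "U \<in> betaZ_set \<Longrightarrow> {} \<notin> U"
  and betaZ_UNIV: "U \<in> betaZ_set \<Longrightarrow> UNIV \<in> U"
  and betaZ_Int: "U \<in> betaZ_set \<Longrightarrow> A \<in> U \<Longrightarrow> B \<in> U \<Longrightarrow> A \<inter> B \<in> U"
  and betaZ_mono: "U \<in> betaZ_set \<Longrightarrow> A \<in> U \<Longrightarrow> A \<subseteq> B \<Longrightarrow> B \<in> U"
  by (auto simp: betaZ_set_def is_ultra_def)

lemma betaZ_Int_iff: "U \<in> betaZ_set \<Longrightarrow> A \<inter> B \<in> U \<longleftrightarrow> A \<in> U \<and> B \<in> U"
  by (meson betaZ_Int betaZ_mono inf_sup_ord(1,2))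

lemma betaZ_Compl_iff: "U \<in> betaZ_set \<Longrightarrow> - A \<in> U \<longleftrightarrow> A \<notin> U"
  by (metis betaZ_empty_notin Compl_disjoint betaZ_set_def is_ultra_def mem_Collect_eq)

lemma betaZ_nonempty: "U \<in> betaZ_set \<Longrightarrow> A \<in> U \<Longrightarrow> \<exists>k. k \<in> A"
  using betaZ_empty_notin by (metis ex_in_conv)

lemma betaZ_INT:
  assumes "U \<in> betaZ_set" "finite C" "\<And>z. z \<in> C \<Longrightarrow> X z \<in> U"
  shows "(\<Inter>z\<in>C. X z) \<in> U"
  using assms(2,3) by induction (simp_all add: betaZ_UNIV betaZ_Int_iff assms(1))

lemma pr_in_betaZ: "pr k \<in> betaZ_set"
  by (rule betaZ_setI) (auto simp: pr_def)

lemma betaZ_singleton_eq_pr: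
  assumes q: "q \<in> betaZ_set" and k: "{k} \<in> q"
  shows "q = pr k"
proof -
  have "A \<in> q \<longleftrightarrow> k \<in> A" for A
    using betaZ_Int_iff[OF q, of A "{k}"] betaZ_empty_notin[OF q] betaZ_mono[OF q k, of A] k
    by (cases "k \<in> A") auto
  then show ?thesis by (auto simp: pr_def)
qed

lemma mem_act_iff: "A \<in> act m q \<longleftrightarrow> (\<lambda>k. k + m) -` A \<in> q"
  by (simp add: act_def)

lemma act_in_betaZ: "q \<in> betaZ_set \<Longrightarrow> act m q \<in> betaZ_set"
  by (rule betaZ_setI)
    (auto simp: mem_act_iff betaZ_empty_notin betaZ_UNIV betaZ_Int_iff betaZ_Compl_iff
      vimage_Compl intro: betaZ_mono vimage_mono)

lemma act_pr: "act m (pr n) = pr (n + m)"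
  by (auto simp: act_def pr_def)

lemma act_0: "act 0 q = q"
  by (simp add: act_def)

lemma act_act: "act m (act n q) = act (n + m) q"
  by (simp add: act_def vimage_def add.assoc)

section \<open>The Stone topology\<close>

definition ultra_nbhd :: "int set \<Rightarrow> int set set set" where
  "ultra_nbhd A = {U \<in> betaZ_set. A \<in> U}"

lemma topspace_betaZ [simp]: "topspace betaZ = betaZ_set"
  unfolding betaZ_def topology_generated_by_topspace using betaZ_UNIV by blast

lemma openin_ultra_nbhd: "openin betaZ (ultra_nbhd A)"
  unfolding betaZ_def ultra_nbhd_def by (rule topology_generated_by_Basis) blast

lemma openin_betaZ_nbhd_base:
  assumes "openin betaZ W" "q \<in> W"
  shows "\<exists>A\<in>q. ultra_nbhd A \<subseteq> W"
proof -
  have "generate_topology_on {{U \<in> betaZ_set. A \<in> U} | A. True} W"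
    using assms(1) unfolding betaZ_def openin_topology_generated_by_iff .
  moreover have "q \<in> betaZ_set"
    using assms openin_subset by fastforce
  ultimately show ?thesis using assms(2)
  proof (induction arbitrary: q)
    case (Int W1 W2)
    then obtain A1 A2 where "A1 \<in> q" "ultra_nbhd A1 \<subseteq> W1" "A2 \<in> q" "ultra_nbhd A2 \<subseteq> W2"
      by blast
    with Int.prems show ?case
      by (intro bexI[of _ "A1 \<inter> A2"]) (auto simp: ultra_nbhd_def betaZ_Int_iff)
  next
    case (UN K)
    then show ?case by blast
  qed (auto simp: ultra_nbhd_def)
qed

lemma openin_betaZI:
  assumes "W \<subseteq> betaZ_set" "\<And>q. q \<in> W \<Longrightarrow> \<exists>A\<in>q. ultra_nbhd A \<subseteq> W"
  shows "openin betaZ W"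
  using assms openin_ultra_nbhd unfolding ultra_nbhd_def by (subst openin_subopen) blast

lemma Hausdorff_space_betaZ: "Hausdorff_space betaZ"
  unfolding Hausdorff_space_def
proof (intro allI impI)
  fix x y assume xy: "x \<in> topspace betaZ \<and> y \<in> topspace betaZ \<and> x \<noteq> y"
  then obtain A where "A \<in> x \<and> A \<notin> y \<or> A \<in> y \<and> A \<notin> x"
    by blast
  with xy have "A \<in> x \<and> - A \<in> y \<or> - A \<in> x \<and> A \<in> y"
    by (auto simp: betaZ_Compl_iff)
  then obtain B where "B \<in> x" "- B \<in> y"
    by (metis double_complement)
  moreover have "disjnt (ultra_nbhd B) (ultra_nbhd (- B))"
    by (auto simp: disjnt_def ultra_nbhd_def betaZ_Compl_iff)
  ultimately show "\<exists>U V. openin betaZ U \<and> openin betaZ V \<and> x \<in> U \<and> y \<in> V \<and> disjnt U V"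
    using xy openin_ultra_nbhd by (auto simp: ultra_nbhd_def)
qed

lemma betaZ_closure_of_range_pr: "betaZ closure_of range pr = betaZ_set"
proof (rule subset_antisym)
  show "betaZ closure_of range pr \<subseteq> betaZ_set"
    by (metis closure_of_subset_topspace topspace_betaZ)
  show "betaZ_set \<subseteq> betaZ closure_of range pr"
  proof
    fix q assume q: "q \<in> betaZ_set"
    have "\<exists>y. y \<in> range pr \<and> y \<in> T" if T: "q \<in> T" "openin betaZ T" for T
    proof -
      obtain A where A: "A \<in> q" "ultra_nbhd A \<subseteq> T"
        using openin_betaZ_nbhd_base[OF T(2,1)] by blast
      obtain k where "k \<in> A"
        using betaZ_nonempty[OF q A(1)] by blast
      then have "pr k \<in> ultra_nbhd A"
        using pr_in_betaZ[of k] unfolding ultra_nbhd_def pr_def by blast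
      then show ?thesis
        using A(2) by blast
    qed
    then show "q \<in> betaZ closure_of range pr"
      using q by (simp add: in_closure_of)
  qed
qed

lemma continuous_maps_betaZ_eq_if_eq_on_pr:
  assumes "Hausdorff_space Y" "continuous_map betaZ Y f" "continuous_map betaZ Y g"
    "\<And>k. f (pr k) = g (pr k)" "q \<in> betaZ_set"
  shows "f q = g q"
proof -
  have "closedin betaZ {x \<in> topspace betaZ. f x = g x}"
    using closedin_continuous_maps_eq assms(1-3) by blast
  moreover have "range pr \<subseteq> {x \<in> topspace betaZ. f x = g x}"
    using assms(4) pr_in_betaZ by auto
  ultimately have "betaZ closure_of range pr \<subseteq> {x \<in> topspace betaZ. f x = g x}"
    by (rule closure_of_minimal[rotated])
  then show ?thesis
    using betaZ_closure_of_range_pr assms(5) by auto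
qed

lemma continuous_maps_betaZ_unique:
  assumes "Hausdorff_space Y" "continuous_map betaZ Y f" "continuous_map betaZ Y g"
    "\<And>k. f (pr k) = g (pr k)" "\<And>q. q \<notin> betaZ_set \<Longrightarrow> f q = g q"
  shows "f = g"
proof
  show "f q = g q" for q
    using continuous_maps_betaZ_eq_if_eq_on_pr[OF assms(1-4)] assms(5) by (cases "q \<in> betaZ_set")
qed

lemma continuous_map_into_betaZI:
  assumes "\<And>q. q \<in> betaZ_set \<Longrightarrow> f q \<in> betaZ_set"
    "\<And>A. openin betaZ {q \<in> betaZ_set. A \<in> f q}"
  shows "continuous_map betaZ betaZ f"
  unfolding continuous_map_def
proof (intro conjI allI impI)
  show "f \<in> topspace betaZ \<rightarrow> topspace betaZ"
    using assms(1) by auto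
  fix W assume W: "openin betaZ W"
  show "openin betaZ {q \<in> topspace betaZ. f q \<in> W}"
  proof (subst openin_subopen, intro ballI)
    fix q assume q: "q \<in> {q \<in> topspace betaZ. f q \<in> W}"
    then obtain A where "A \<in> f q" "ultra_nbhd A \<subseteq> W"
      using openin_betaZ_nbhd_base[OF W] by auto
    then show "\<exists>T. openin betaZ T \<and> q \<in> T \<and> T \<subseteq> {q \<in> topspace betaZ. f q \<in> W}"
      using q assms by (intro exI[of _ "{q \<in> betaZ_set. A \<in> f q}"]) (auto simp: ultra_nbhd_def)
  qed
qed

lemma continuous_map_betaZ_if_mem:
  assumes "x \<in> topspace X" "y \<in> topspace X"
  shows "continuous_map betaZ X (\<lambda>q. if A \<in> q then x else y)"
  unfolding continuous_map_def
proof (intro conjI allI impI)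
  show "(\<lambda>q. if A \<in> q then x else y) \<in> topspace betaZ \<rightarrow> topspace X"
    using assms by simp
  fix W assume "openin X W"
  have "{q \<in> topspace betaZ. (if A \<in> q then x else y) \<in> W} =
      (if x \<in> W then ultra_nbhd A else {}) \<union> (if y \<in> W then ultra_nbhd (- A) else {})"
    by (auto simp: ultra_nbhd_def betaZ_Compl_iff)
  then show "openin betaZ {q \<in> topspace betaZ. (if A \<in> q then x else y) \<in> W}"
    by (simp add: openin_ultra_nbhd openin_Un)
qed

lemma continuous_map_act: "continuous_map betaZ betaZ (act m)"
proof (rule continuous_map_into_betaZI)
  show "openin betaZ {q \<in> betaZ_set. A \<in> act m q}" for A
    using openin_ultra_nbhd[of "(\<lambda>k. k + m) -` A"] by (simp add: ultra_nbhd_def mem_act_iff)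
qed (rule act_in_betaZ)

section \<open>The maps \<open>p\<^sub>\<omega>\<close>\<close>

definition ultra_ext :: "(int \<Rightarrow> int set set) \<Rightarrow> int set set \<Rightarrow> int set set" where
  "ultra_ext u q = (if q \<in> betaZ_set then {A. {k. A \<in> u k} \<in> q} else undefined)"

lemma ultra_ext_in_betaZ:
  assumes u: "\<And>k. u k \<in> betaZ_set" and q: "q \<in> betaZ_set"
  shows "ultra_ext u q \<in> betaZ_set"
proof -
  have Int: "{k. A \<inter> B \<in> u k} = {k. A \<in> u k} \<inter> {k. B \<in> u k}" for A B
    using betaZ_Int_iff[OF u] by blast
  have Compl: "{k. - A \<in> u k} = - {k. A \<in> u k}" for A
    using betaZ_Compl_iff[OF u] by blast
  have mono: "A \<subseteq> B \<Longrightarrow> {k. A \<in> u k} \<subseteq> {k. B \<in> u k}" for A B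
    using betaZ_mono[OF u] by blast
  have "{k. {} \<in> u k} = {}" "{k. UNIV \<in> u k} = UNIV"
    using betaZ_empty_notin[OF u] betaZ_UNIV[OF u] by auto
  with q show ?thesis
    unfolding ultra_ext_def
    by (intro betaZ_setI)
      (auto simp: Int Compl betaZ_empty_notin betaZ_UNIV betaZ_Int_iff betaZ_Compl_iff
        dest: mono intro: betaZ_mono[OF q])
qed

lemma ultra_ext_pr: "ultra_ext u (pr k) = u k"
  using pr_in_betaZ[of k] by (simp add: ultra_ext_def) (simp add: pr_def)

lemma continuous_map_ultra_ext:
  assumes "\<And>k. u k \<in> betaZ_set"
  shows "continuous_map betaZ betaZ (ultra_ext u)"
proof (rule continuous_map_into_betaZI)
  fix A
  have "{q \<in> betaZ_set. A \<in> ultra_ext u q} = ultra_nbhd {k. A \<in> u k}"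
    by (auto simp: ultra_nbhd_def ultra_ext_def)
  then show "openin betaZ {q \<in> betaZ_set. A \<in> ultra_ext u q}"
    by (simp add: openin_ultra_nbhd)
qed (rule ultra_ext_in_betaZ[OF assms])

lemma p_om_eq_ultra_ext:
  assumes "\<omega> \<in> betaZ_set"
  shows "p_om \<omega> = ultra_ext (\<lambda>k. act k \<omega>)"
  unfolding p_om_def
proof (rule the_equality)
  have act: "act k \<omega> \<in> betaZ_set" for k
    using act_in_betaZ[OF assms] .
  show "continuous_map betaZ betaZ (ultra_ext (\<lambda>k. act k \<omega>)) \<and>
      (\<forall>k. ultra_ext (\<lambda>k. act k \<omega>) (pr k) = act k \<omega>) \<and>
      (\<forall>q. q \<notin> betaZ_set \<longrightarrow> ultra_ext (\<lambda>k. act k \<omega>) q = undefined)"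
    using continuous_map_ultra_ext[of "\<lambda>k. act k \<omega>", OF act]
    by (simp add: ultra_ext_pr) (simp add: ultra_ext_def)
  then show "g = ultra_ext (\<lambda>k. act k \<omega>)"
    if "continuous_map betaZ betaZ g \<and> (\<forall>k. g (pr k) = act k \<omega>) \<and>
      (\<forall>q. q \<notin> betaZ_set \<longrightarrow> g q = undefined)" for g
    using that by (intro continuous_maps_betaZ_unique[OF Hausdorff_space_betaZ]) auto
qed

context
  fixes \<omega> :: "int set set"
  assumes \<omega>: "\<omega> \<in> betaZ_set"
begin

lemma continuous_map_p_om: "continuous_map betaZ betaZ (p_om \<omega>)"
  using continuous_map_ultra_ext act_in_betaZ[OF \<omega>] by (simp add: p_om_eq_ultra_ext[OF \<omega>])

lemma p_om_in_betaZ: "q \<in> betaZ_set \<Longrightarrow> p_om \<omega> q \<in> betaZ_set"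
  using continuous_map_image_subset_topspace[OF continuous_map_p_om] by auto

lemma p_om_pr: "p_om \<omega> (pr k) = act k \<omega>"
  by (simp add: p_om_eq_ultra_ext[OF \<omega>] ultra_ext_pr)

lemma p_om_act:
  assumes "q \<in> betaZ_set"
  shows "p_om \<omega> (act m q) = act m (p_om \<omega> q)"
  using continuous_maps_betaZ_eq_if_eq_on_pr[OF Hausdorff_space_betaZ _ _ _ assms,
      of "p_om \<omega> \<circ> act m" "act m \<circ> p_om \<omega>"]
    continuous_map_compose[OF continuous_map_act continuous_map_p_om]
    continuous_map_compose[OF continuous_map_p_om continuous_map_act]
  by (simp add: act_pr p_om_pr act_act)

end

lemma star_in_betaZ: "\<omega> \<in> betaZ_set \<Longrightarrow> q \<in> betaZ_set \<Longrightarrow> \<omega> \<star> q \<in> betaZ_set"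
  by (simp add: star_def p_om_in_betaZ)

lemma star_assoc:
  assumes "\<upsilon> \<in> betaZ_set" "\<omega> \<in> betaZ_set" "q \<in> betaZ_set"
  shows "\<upsilon> \<star> (\<omega> \<star> q) = (\<upsilon> \<star> \<omega>) \<star> q"
  using continuous_maps_betaZ_eq_if_eq_on_pr[OF Hausdorff_space_betaZ _ _ _ assms(3),
      of "p_om \<upsilon> \<circ> p_om \<omega>" "p_om (\<upsilon> \<star> \<omega>)"]
    continuous_map_compose[OF continuous_map_p_om[OF assms(2)] continuous_map_p_om[OF assms(1)]]
    continuous_map_p_om[OF star_in_betaZ[OF assms(1,2)]]
  by (simp add: star_def p_om_pr assms p_om_act star_in_betaZ[unfolded star_def])

section \<open>Idempotent \<open>\<omega>\<close>\<close>

lemma p_om_idempotent: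
  assumes "\<omega> \<in> betaZ_set" "\<omega> \<star> \<omega> = \<omega>" "q \<in> betaZ_set"
  shows "p_om \<omega> (p_om \<omega> q) = p_om \<omega> q"
  using star_assoc[OF assms(1,1,3)] assms(2) by (simp add: star_def)

lemma Z_retraction_p_om:
  assumes \<omega>: "\<omega> \<in> betaZ_set" and "\<omega> \<star> \<omega> = \<omega>"
  shows "Z_retraction (p_om \<omega>) (p_om \<omega> ` betaZ_set)"
proof -
  have fixed: "p_om \<omega> ` betaZ_set = {q \<in> topspace betaZ. p_om \<omega> q = id q}"
    using p_om_idempotent[OF assms] p_om_in_betaZ[OF \<omega>] by (auto intro: rev_image_eqI)
  show ?thesis
    unfolding Z_retraction_def
  proof (intro conjI allI ballI)
    show "closedin betaZ (p_om \<omega> ` betaZ_set)"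
      unfolding fixed
      by (rule closedin_continuous_maps_eq[OF Hausdorff_space_betaZ continuous_map_p_om[OF \<omega>]
            continuous_map_id])
    show "act m ` p_om \<omega> ` betaZ_set \<subseteq> p_om \<omega> ` betaZ_set" for m
    proof (rule image_subsetI, clarify)
      show "act m (p_om \<omega> q) \<in> p_om \<omega> ` betaZ_set" if "q \<in> betaZ_set" for q
        using p_om_act[OF \<omega> that] act_in_betaZ[OF that] by (metis image_eqI)
    qed
    show "continuous_map betaZ (subtopology betaZ (p_om \<omega> ` betaZ_set)) (p_om \<omega>)"
      by (simp add: continuous_map_into_subtopology continuous_map_p_om[OF \<omega>])
    show "p_om \<omega> (act m q) = act m (p_om \<omega> q)" if "q \<in> betaZ_set" for m q
      using p_om_act[OF \<omega> that] .
    show "p_om \<omega> y = y" if "y \<in> p_om \<omega> ` betaZ_set" for y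
      using that fixed by auto
  qed (use p_om_in_betaZ[OF \<omega>] in auto)
qed

lemma p_om_image_psubset:
  assumes "\<omega> \<in> corona" "\<omega> \<star> \<omega> = \<omega>"
  shows "p_om \<omega> ` betaZ_set \<subset> betaZ_set"
proof -
  have \<omega>: "\<omega> \<in> betaZ_set" "\<omega> \<noteq> pr 0"
    using assms(1) by (auto simp: corona_def)
  have "pr 0 \<notin> p_om \<omega> ` betaZ_set"
    using p_om_idempotent[OF \<omega>(1) assms(2)] p_om_pr[OF \<omega>(1), of 0] \<omega>(2) by (auto simp: act_0)
  then show ?thesis
    using p_om_in_betaZ[OF \<omega>(1)] pr_in_betaZ by blast
qed

lemma comp_p_om_not_onto:
  assumes "\<omega> \<in> corona" "\<omega> \<star> \<omega> = \<omega>"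
  shows "\<exists>g\<in>CbZ. \<not> (\<exists>f\<in>CbZ. \<forall>q\<in>betaZ_set. g q = f (p_om \<omega> q))"
proof
  let ?g = "\<lambda>q. if {0::int} \<in> q then 1 else 0 :: complex"
  show "?g \<in> CbZ"
    by (simp add: CbZ_def continuous_map_betaZ_if_mem)
  have \<omega>: "\<omega> \<in> betaZ_set" "{0} \<notin> \<omega>"
    using assms(1) betaZ_singleton_eq_pr by (auto simp: corona_def)
  have "p_om \<omega> (pr 0) = p_om \<omega> \<omega>"
    using assms(2) p_om_pr[OF \<omega>(1), of 0] by (simp add: star_def act_0)
  moreover have "?g (pr 0) \<noteq> ?g \<omega>"
    using \<omega>(2) by (simp add: pr_def)
  ultimately show "\<not> (\<exists>f\<in>CbZ. \<forall>q\<in>betaZ_set. ?g q = f (p_om \<omega> q))"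
    using \<omega>(1) pr_in_betaZ by metis
qed

section \<open>Characters and the spectrum\<close>

definition ultra_limit :: "(int \<Rightarrow> 'a::metric_space) \<Rightarrow> int set set \<Rightarrow> 'a" where
  "ultra_limit a q = (SOME z. \<forall>e>0. {n. dist (a n) z < e} \<in> q)"

lemma ultra_limit_exists:
  fixes a :: "int \<Rightarrow> 'a::metric_space"
  assumes q: "q \<in> betaZ_set" and K: "compact K" "\<And>n. a n \<in> K"
  shows "\<exists>z. \<forall>e>0. {n. dist (a n) z < e} \<in> q"
proof (rule ccontr)
  assume "\<not> ?thesis"
  then obtain e where e: "\<And>z. e z > 0" "\<And>z. {n. dist (a n) z < e z} \<notin> q"
    by metis
  then have "K \<subseteq> (\<Union>z\<in>K. ball z (e z))"
    by force
  then obtain C where C: "C \<subseteq> K" "finite C" "K \<subseteq> (\<Union>z\<in>C. ball z (e z))"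
    using compactE_image[OF K(1), of K "\<lambda>z. ball z (e z)"] by blast
  have "(\<Inter>z\<in>C. - {n. dist (a n) z < e z}) \<in> q"
    using e(2) betaZ_Compl_iff[OF q] by (intro betaZ_INT[OF q C(2)]) blast
  moreover have "(\<Inter>z\<in>C. - {n. dist (a n) z < e z}) = {}"
    using C(3) K(2) by (fastforce simp: dist_commute)
  ultimately show False
    using betaZ_empty_notin[OF q] by simp
qed

lemma ultra_limit_close:
  fixes a :: "int \<Rightarrow> 'a::metric_space"
  assumes "q \<in> betaZ_set" "compact K" "\<And>n. a n \<in> K" "e > 0"
  shows "{n. dist (a n) (ultra_limit a q) < e} \<in> q"
  using someI_ex[OF ultra_limit_exists[where a=a, OF assms(1-3)]] assms(4) unfolding ultra_limit_def by blast

lemma ultra_limit_pr: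
  fixes a :: "int \<Rightarrow> 'a::metric_space"
  assumes "compact K" "\<And>n. a n \<in> K"
  shows "ultra_limit a (pr k) = a k"
proof -
  have "dist (a k) (ultra_limit a (pr k)) < e" if "e > 0" for e
    using ultra_limit_close[where a=a, OF pr_in_betaZ[of k] assms that] by (simp add: pr_def)
  then show ?thesis
    by (metis dist_nz order_less_irrefl)
qed

lemma continuous_map_ultra_limit:
  fixes a :: "int \<Rightarrow> 'a::metric_space"
  assumes K: "compact K" "\<And>n. a n \<in> K"
  shows "continuous_map betaZ euclidean (ultra_limit a)"
  unfolding continuous_map_def
proof (intro conjI allI impI)
  show "ultra_limit a \<in> topspace betaZ \<rightarrow> topspace euclidean"
    by simp
  fix U :: "'a set" assume "openin euclidean U"
  then have U: "open U"
    by simp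
  show "openin betaZ {q \<in> topspace betaZ. ultra_limit a q \<in> U}"
  proof (rule openin_betaZI)
    fix q assume "q \<in> {q \<in> topspace betaZ. ultra_limit a q \<in> U}"
    then have q: "q \<in> betaZ_set" "ultra_limit a q \<in> U"
      by auto
    then obtain e where e: "e > 0" "ball (ultra_limit a q) e \<subseteq> U"
      using U openE by blast
    define B where "B = {n. dist (a n) (ultra_limit a q) < e/2}"
    have "B \<in> q"
      unfolding B_def using ultra_limit_close[where a=a, OF q(1) K, of "e/2"] e by simp
    moreover have "p \<in> {q \<in> topspace betaZ. ultra_limit a q \<in> U}" if "p \<in> ultra_nbhd B" for p
    proof -
      have p: "p \<in> betaZ_set" "B \<in> p"
        using that by (auto simp: ultra_nbhd_def)
      have "B \<inter> {n. dist (a n) (ultra_limit a p) < e/2} \<in> p"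
        using ultra_limit_close[where a=a, OF p(1) K, of "e/2"] e p by (simp add: betaZ_Int_iff)
      then obtain n where "dist (a n) (ultra_limit a q) < e/2" "dist (a n) (ultra_limit a p) < e/2"
        using betaZ_nonempty[OF p(1)] unfolding B_def by blast
      then have "dist (ultra_limit a q) (ultra_limit a p) < e"
        by (metis dist_commute dist_triangle_half_l)
      then show ?thesis
        using e p by auto
    qed
    ultimately show "\<exists>B\<in>q. ultra_nbhd B \<subseteq> {q \<in> topspace betaZ. ultra_limit a q \<in> U}"
      by blast
  qed auto
qed

context
  fixes l :: complex
  assumes l: "norm l = 1"
begin

lemma powi_in_cball: "l powi n \<in> cball 0 1"
  using l by (simp add: norm_power_int)

lemma xhat_eq_ultra_limit:
  "xhat l = (\<lambda>q. if q \<in> betaZ_set then ultra_limit (\<lambda>n. l powi n) q else 0)"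
  unfolding xhat_def
proof (rule the_equality)
  let ?f = "\<lambda>q. if q \<in> betaZ_set then ultra_limit (\<lambda>n. l powi n) q else 0"
  note K = compact_cball powi_in_cball
  show "continuous_map betaZ euclidean ?f \<and> (\<forall>n. ?f (pr n) = l powi n) \<and>
      (\<forall>q. q \<notin> betaZ_set \<longrightarrow> ?f q = 0)"
    using continuous_map_eq[OF continuous_map_ultra_limit[OF K]] ultra_limit_pr[OF K]
    by (simp add: pr_in_betaZ)
  then show "g = ?f" if "continuous_map betaZ euclidean g \<and> (\<forall>n. g (pr n) = l powi n) \<and>
      (\<forall>q. q \<notin> betaZ_set \<longrightarrow> g q = 0)" for g
    using that by (intro continuous_maps_betaZ_unique[OF Hausdorff_space_euclidean]) auto
qed

lemma continuous_map_xhat: "continuous_map betaZ euclidean (xhat l)"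
  unfolding xhat_eq_ultra_limit
  by (rule continuous_map_eq[OF continuous_map_ultra_limit[OF compact_cball powi_in_cball]]) simp

lemma xhat_pr: "xhat l (pr n) = l powi n"
  by (simp add: xhat_eq_ultra_limit pr_in_betaZ ultra_limit_pr[OF compact_cball powi_in_cball])

lemma xhat_act:
  assumes "q \<in> betaZ_set"
  shows "xhat l (act k q) = l powi k * xhat l q"
proof -
  have "continuous_map betaZ euclidean (\<lambda>q. l powi k * xhat l q)"
    using continuous_map_xhat by (simp add: continuous_map_atin tendsto_mult)
  moreover have "l \<noteq> 0"
    using l by auto
  ultimately show ?thesis
    using continuous_maps_betaZ_eq_if_eq_on_pr[OF Hausdorff_space_euclidean
        continuous_map_compose[OF continuous_map_act continuous_map_xhat] _ _ assms]
    by (simp add: act_pr xhat_pr power_int_add mult.commute)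
qed

lemma norm_xhat:
  assumes "q \<in> betaZ_set"
  shows "norm (xhat l q) = 1"
  using continuous_maps_betaZ_eq_if_eq_on_pr[OF Hausdorff_space_euclidean
      continuous_map_norm[OF continuous_map_xhat] _ _ assms, of "\<lambda>q. 1"] l
  by (simp add: xhat_pr norm_power_int)

lemma xhat_p_om:
  assumes "\<omega> \<in> betaZ_set" "q \<in> betaZ_set"
  shows "xhat l (p_om \<omega> q) = xhat l \<omega> * xhat l q"
proof -
  have "continuous_map betaZ euclidean (\<lambda>q. xhat l \<omega> * xhat l q)"
    using continuous_map_xhat by (simp add: continuous_map_atin tendsto_mult)
  then show ?thesis
    using continuous_maps_betaZ_eq_if_eq_on_pr[OF Hausdorff_space_euclidean
        continuous_map_compose[OF continuous_map_p_om[OF assms(1)] continuous_map_xhat] _ _ assms(2),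
        of "\<lambda>q. xhat l \<omega> * xhat l q"]
    by (simp add: p_om_pr[OF assms(1)] xhat_act[OF assms(1)] xhat_pr mult.commute)
qed

end

lemma sigma_map_comp_p_om:
  assumes "\<omega> \<in> betaZ_set"
  shows "sigma_map (\<lambda>f. f \<circ> p_om \<omega>) = sphere 0 1"
proof
  show "sigma_map (\<lambda>f. f \<circ> p_om \<omega>) \<subseteq> sphere 0 1"
    by (auto simp: sigma_map_def)
  show "sphere 0 1 \<subseteq> sigma_map (\<lambda>f. f \<circ> p_om \<omega>)"
  proof
    fix l :: complex assume "l \<in> sphere 0 1"
    then have l: "norm l = 1"
      by simp
    then have "xhat l \<omega> \<noteq> 0"
      using norm_xhat[OF l assms] by auto
    with l show "l \<in> sigma_map (\<lambda>f. f \<circ> p_om \<omega>)"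
      unfolding sigma_map_def using xhat_p_om[OF l assms] by auto
  qed
qed

theorem theorem2p13:
  fixes \<omega> :: "int set set"
  assumes "\<omega> \<in> corona" and "\<omega> \<star> \<omega> = \<omega>"
  defines "\<pi> \<equiv> (\<lambda>f. f \<circ> p_om \<omega>)"
  shows "Z_retraction (p_om \<omega>) (p_om \<omega> ` betaZ_set)
    \<and> p_om \<omega> ` betaZ_set \<subset> betaZ_set
    \<and> (\<forall>f\<in>CbZ. \<pi> f \<in> CbZ)
    \<and> (\<forall>f\<in>CbZ. \<forall>m. \<forall>q\<in>betaZ_set. \<pi> (\<lambda>x. f (act m x)) q = \<pi> f (act m q))
    \<and> (\<forall>f\<in>CbZ. \<forall>g\<in>CbZ. \<forall>a b. \<forall>q\<in>betaZ_set.
          \<pi> (\<lambda>x. a * f x + b * g x) q = a * \<pi> f q + b * \<pi> g q)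
    \<and> (\<forall>f\<in>CbZ. \<forall>g\<in>CbZ. \<forall>q\<in>betaZ_set. \<pi> (\<lambda>x. f x * g x) q = \<pi> f q * \<pi> g q)
    \<and> (\<forall>f\<in>CbZ. \<forall>q\<in>betaZ_set. \<pi> (\<lambda>x. cnj (f x)) q = cnj (\<pi> f q))
    \<and> (\<forall>q\<in>betaZ_set. \<pi> (\<lambda>x. 1) q = 1)
    \<and> (\<forall>f\<in>CbZ. \<forall>q\<in>betaZ_set. \<pi> (\<pi> f) q = \<pi> f q)
    \<and> (\<exists>g\<in>CbZ. \<not> (\<exists>f\<in>CbZ. \<forall>q\<in>betaZ_set. g q = \<pi> f q))
    \<and> sigma_map \<pi> = sphere 0 1"
proof -
  have \<omega>: "\<omega> \<in> betaZ_set"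
    using assms(1) by (simp add: corona_def)
  have "\<pi> f \<in> CbZ" if "f \<in> CbZ" for f
    using that continuous_map_compose[OF continuous_map_p_om[OF \<omega>]] by (simp add: CbZ_def \<pi>_def)
  then show ?thesis
    using Z_retraction_p_om[OF \<omega> assms(2)] p_om_image_psubset[OF assms(1,2)]
      comp_p_om_not_onto[OF assms(1,2)] sigma_map_comp_p_om[OF \<omega>]
    by (simp add: \<pi>_def p_om_act[OF \<omega>] p_om_idempotent[OF \<omega> assms(2)])
qed

end
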